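(* In the strategic parking problem on a weighted line graph, any (random) pricing function $P$ on the vacant slots that satisfies the Harmonic Payment Conditions ensures harmonic behaviour of an arriving car, regardless of its goal: if its goal is vacant it parks there; otherwise, letting $v_L,v_R$ be the nearest vacant slots to the left and right of its goal $v$, it parks at $v_L$ with probability $\frac{d(v,v_R)}{d(v,v_L)+d(v,v_R)}$ and at $v_R$ otherwise.
   Context: Parking slots are vertices on a line with path distances $d$; some are occupied and $V'$ is the set of vacant slots. An arriving car with goal vertex $g$ parks at a vacant slot $x$ minimizing $d(g,x)+P(x)$. A block is a maximal contiguous run of occupied slots; for a block $B_j$, $L(B_j)$ and $R(B_j)$ are the first vacant slots to its left and right, $d_j=d(L(B_j),R(B_j))$, and $D_j$ is the uniform distribution on $[-d_j,d_j]$. $P:V'\to\mathbb{R}_{\ge0}$ satisfies the Harmonic Payment Conditions if (1) for every block $B_j$, $P(L(B_j))-P(R(B_j))\sim D_j$; and (2) for any $u,v\in V'$ with no vacant slot between them, $-d(u,v)<P(u)-P(v)<d(u,v)$. *)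

theory Defs
  imports "HOL-Probability.Probability"
begin

text \<open>Weighted line graph on vertices 0,...,n-1; edge {k, k+1} has weight w k.
  Path distance between i and j.\<close>
definition dist_line :: "(nat \<Rightarrow> real) \<Rightarrow> nat \<Rightarrow> nat \<Rightarrow> real" where
  "dist_line w i j = (\<Sum>k\<in>{min i j..<max i j}. w k)"

definition vacant :: "nat \<Rightarrow> nat set \<Rightarrow> nat set" where
  "vacant n occ = {..<n} - occ"

definition is_block :: "nat \<Rightarrow> nat set \<Rightarrow> nat \<Rightarrow> nat \<Rightarrow> bool" where
  "is_block n occ a b \<longleftrightarrow> a \<le> b \<and> b < n \<and> {a..b} \<subseteq> occ \<and>
     (a = 0 \<or> a - 1 \<notin> occ) \<and> (b + 1 = n \<or> b + 1 \<notin> occ)"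

definition harmonic_payment ::
  "'w measure \<Rightarrow> nat \<Rightarrow> nat set \<Rightarrow> (nat \<Rightarrow> real) \<Rightarrow> ('w \<Rightarrow> nat \<Rightarrow> real) \<Rightarrow> bool" where
  "harmonic_payment M n occ w P \<longleftrightarrow>
     (\<forall>a b. is_block n occ a b \<and> 0 < a \<and> b + 1 < n \<longrightarrow>
        distr M lborel (\<lambda>\<omega>. P \<omega> (a - 1) - P \<omega> (b + 1))
          = uniform_measure lborel {- dist_line w (a - 1) (b + 1) .. dist_line w (a - 1) (b + 1)}) \<and>
     (AE \<omega> in M. \<forall>u\<in>vacant n occ. \<forall>v\<in>vacant n occ. u < v \<and> (\<forall>x\<in>{u<..<v}. x \<notin> vacant n occ) \<longrightarrow>
        - dist_line w u v < P \<omega> u - P \<omega> v \<and> P \<omega> u - P \<omega> v < dist_line w u v)"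

definition parks_at :: "nat \<Rightarrow> nat set \<Rightarrow> (nat \<Rightarrow> real) \<Rightarrow> (nat \<Rightarrow> real) \<Rightarrow> nat \<Rightarrow> nat \<Rightarrow> bool" where
  "parks_at n occ w p g x \<longleftrightarrow> x \<in> vacant n occ \<and>
     (\<forall>y\<in>vacant n occ. y \<noteq> x \<longrightarrow> dist_line w g x + p x < dist_line w g y + p y)"

end

theory Submission
  imports Defs
begin

text \<open>The Harmonic Payment Conditions give, almost surely, prices whose difference
  between any two vacant slots is strictly less than their distance: bounds between
  adjacent vacant slots chain along the line because distances add up.
  Hence a car with a vacant goal never gains by driving away, and a car whose goal v
  lies in a block between vL and vR only ever compares these two slots;
  it picks vL exactly when P(vL) - P(vR) < d(v,vR) - d(v,vL).
  Since this difference is uniform on [-d(vL,vR), d(vL,vR)] and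
  d(vL,vR) = d(v,vL) + d(v,vR), that event has probability
  d(v,vR) / (d(v,vL) + d(v,vR)).\<close>

lemma dist_line_sym: "dist_line w i j = dist_line w j i"
  unfolding dist_line_def by (simp add: min.commute max.commute)

lemma dist_line_self [simp]: "dist_line w i i = 0"
  unfolding dist_line_def by simp

lemma dist_line_add:
  "i \<le> j \<Longrightarrow> j \<le> k \<Longrightarrow> dist_line w i k = dist_line w i j + dist_line w j k"
  unfolding dist_line_def by (simp add: sum.atLeastLessThan_concat)

lemma dist_line_pos:
  assumes "\<And>k. k + 1 < n \<Longrightarrow> 0 < w k" and "i < j" and "j < n"
  shows "0 < dist_line w i j"
proof -
  have "dist_line w i j = (\<Sum>k\<in>{i..<j}. w k)"
    unfolding dist_line_def using assms by simp
  also have "\<dots> > 0"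
    using assms by (intro sum_pos) auto
  finally show ?thesis .
qed

definition price_gaps_below_dist :: "(nat \<Rightarrow> real) \<Rightarrow> nat set \<Rightarrow> (nat \<Rightarrow> real) \<Rightarrow> bool" where
  "price_gaps_below_dist w V p \<longleftrightarrow>
     (\<forall>u\<in>V. \<forall>y\<in>V. u < y \<longrightarrow> \<bar>p u - p y\<bar> < dist_line w u y)"

lemma price_gaps_below_dist_if_adjacent:
  fixes p :: "nat \<Rightarrow> real"
  assumes "finite V"
    and adjacent: "\<forall>u\<in>V. \<forall>v\<in>V. u < v \<and> (\<forall>x\<in>{u<..<v}. x \<notin> V) \<longrightarrow>
        - dist_line w u v < p u - p v \<and> p u - p v < dist_line w u v"
  shows "price_gaps_below_dist w V p"
  unfolding price_gaps_below_dist_def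
proof (intro ballI impI)
  fix u y assume "u \<in> V" "y \<in> V" "u < y"
  then show "\<bar>p u - p y\<bar> < dist_line w u y"
  proof (induction y rule: less_induct)
    case (less y)
    define z where "z = Max {x\<in>V. u \<le> x \<and> x < y}"
    have "z \<in> {x\<in>V. u \<le> x \<and> x < y}"
      unfolding z_def using \<open>finite V\<close> less.prems by (intro Max_in) auto
    then have z: "z \<in> V" "u \<le> z" "z < y"
      by auto
    have "\<forall>x\<in>{z<..<y}. x \<notin> V"
      using Max_ge[of "{x\<in>V. u \<le> x \<and> x < y}"] \<open>finite V\<close> z unfolding z_def by fastforce
    then have "- dist_line w z y < p z - p y \<and> p z - p y < dist_line w z y"
      using adjacent z less.prems(2) by blast
    then have zy: "\<bar>p z - p y\<bar> < dist_line w z y"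
      by (simp add: abs_less_iff)
    show ?case
    proof (cases "z = u")
      case True
      with zy show ?thesis by simp
    next
      case False
      then have "\<bar>p u - p z\<bar> < dist_line w u z"
        using less.IH z less.prems(1) by simp
      moreover have "dist_line w u y = dist_line w u z + dist_line w z y"
        using z by (intro dist_line_add) auto
      ultimately show ?thesis
        using zy by linarith
    qed
  qed
qed

lemma harmonic_payment_AE_price_gaps:
  assumes "harmonic_payment M n occ w P"
  shows "AE \<omega> in M. price_gaps_below_dist w (vacant n occ) (P \<omega>)"
proof -
  have "finite (vacant n occ)"
    unfolding vacant_def by simp
  with assms show ?thesis
    unfolding harmonic_payment_def by (auto elim!: AE_mp intro: price_gaps_below_dist_if_adjacent)
qed

lemma parks_at_vacant_goal:
  assumes "price_gaps_below_dist w (vacant n occ) p" and "g \<in> vacant n occ"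
  shows "parks_at n occ w p g g"
  unfolding parks_at_def
proof (intro conjI ballI impI)
  fix y assume "y \<in> vacant n occ" "y \<noteq> g"
  then consider "y < g" | "g < y"
    by linarith
  then show "dist_line w g g + p g < dist_line w g y + p y"
    using assms \<open>y \<in> vacant n occ\<close> unfolding price_gaps_below_dist_def
    by cases (fastforce simp: dist_line_sym)+
qed (fact assms(2))

lemma cost_outside_gap_gt:
  assumes gaps: "price_gaps_below_dist w (vacant n occ) p"
    and L: "vL \<in> vacant n occ" and R: "vR \<in> vacant n occ" and "vL < v" "v < vR"
    and y: "y \<in> vacant n occ" "y \<notin> {vL..vR}"
  shows "min (dist_line w v vL + p vL) (dist_line w v vR + p vR) < dist_line w v y + p y"
proof (cases "y < vL")
  case True
  have "\<bar>p y - p vL\<bar> < dist_line w y vL"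
    using gaps L y True unfolding price_gaps_below_dist_def by blast
  moreover have "dist_line w v y = dist_line w v vL + dist_line w vL y"
    using dist_line_add[of y vL v w] True \<open>vL < v\<close> by (simp add: dist_line_sym)
  ultimately show ?thesis
    by (simp add: dist_line_sym)
next
  case False
  then have "vR < y"
    using y by auto
  then have "\<bar>p vR - p y\<bar> < dist_line w vR y"
    using gaps R y unfolding price_gaps_below_dist_def by blast
  moreover have "dist_line w v y = dist_line w v vR + dist_line w vR y"
    using dist_line_add[of v vR y w] \<open>vR < y\<close> \<open>v < vR\<close> by simp
  ultimately show ?thesis
    by linarith
qed

lemma parks_at_gap_end_iff:
  assumes gaps: "price_gaps_below_dist w (vacant n occ) p"
    and L: "vL \<in> vacant n occ" and R: "vR \<in> vacant n occ" and "vL < v" "v < vR"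
    and gap: "\<forall>x\<in>{vL<..<vR}. x \<notin> vacant n occ"
  shows "parks_at n occ w p v vL \<longleftrightarrow> dist_line w v vL + p vL < dist_line w v vR + p vR"
    and "parks_at n occ w p v vR \<longleftrightarrow> dist_line w v vR + p vR < dist_line w v vL + p vL"
proof -
  have outside: "min (dist_line w v vL + p vL) (dist_line w v vR + p vR) < dist_line w v y + p y"
    if "y \<in> vacant n occ" "y \<noteq> vL" "y \<noteq> vR" for y
    using cost_outside_gap_gt[OF gaps L R \<open>vL < v\<close> \<open>v < vR\<close>] gap that by force
  show "parks_at n occ w p v vL \<longleftrightarrow> dist_line w v vL + p vL < dist_line w v vR + p vR"
    using L R \<open>vL < v\<close> \<open>v < vR\<close> outside unfolding parks_at_def by force
  show "parks_at n occ w p v vR \<longleftrightarrow> dist_line w v vR + p vR < dist_line w v vL + p vL"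
    using L R \<open>vL < v\<close> \<open>v < vR\<close> outside unfolding parks_at_def by force
qed

lemma sets_parks_at:
  assumes "\<And>x. x \<in> vacant n occ \<Longrightarrow> (\<lambda>\<omega>. P \<omega> x) \<in> borel_measurable M"
  shows "{\<omega> \<in> space M. parks_at n occ w (P \<omega>) v x} \<in> sets M"
proof (cases "x \<in> vacant n occ")
  case True
  have "{\<omega> \<in> space M. parks_at n occ w (P \<omega>) v x} =
      {\<omega> \<in> space M. \<forall>y\<in>vacant n occ. y \<noteq> x \<longrightarrow> dist_line w v x + P \<omega> x < dist_line w v y + P \<omega> y}"
    unfolding parks_at_def using True by auto
  also have "\<dots> \<in> sets M"
    using True assms by (intro sets.sets_Collect_finite_All) (auto simp: vacant_def)
  finally show ?thesis .
qed (simp add: parks_at_def)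

lemma measure_uniform_distr_less:
  fixes X :: "'a \<Rightarrow> real"
  assumes X: "X \<in> borel_measurable M"
    and distr: "distr M lborel X = uniform_measure lborel {a..b}"
    and "a < b" "a \<le> c" "c \<le> b"
  shows "measure M {\<omega> \<in> space M. X \<omega> < c} = (c - a) / (b - a)"
    and "measure M {\<omega> \<in> space M. c < X \<omega>} = (b - c) / (b - a)"
proof -
  have prob_X: "measure M {\<omega> \<in> space M. X \<omega> \<in> A} = measure lborel ({a..b} \<inter> A) / (b - a)"
    if "A \<in> sets borel" for A
  proof -
    have "measure M {\<omega> \<in> space M. X \<omega> \<in> A} = measure (distr M lborel X) A"
      using X that by (subst measure_distr) (auto intro: arg_cong[where f = "measure M"])
    also have "\<dots> = measure lborel ({a..b} \<inter> A) / measure lborel {a..b}"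
      unfolding distr using \<open>a < b\<close> that by (intro measure_uniform_measure) auto
    finally show ?thesis
      using \<open>a < b\<close> by simp
  qed
  have "{a..b} \<inter> {..<c} = {a..<c}" "{a..b} \<inter> {c<..} = {c<..b}"
    using \<open>a \<le> c\<close> \<open>c \<le> b\<close> by auto
  then show "measure M {\<omega> \<in> space M. X \<omega> < c} = (c - a) / (b - a)"
    and "measure M {\<omega> \<in> space M. c < X \<omega>} = (b - c) / (b - a)"
    using prob_X[of "{..<c}"] prob_X[of "{c<..}"] assms(4,5) by simp_all
qed

lemma harmonic_payment_gap_distr:
  assumes "harmonic_payment M n occ w P"
    and "vL \<in> vacant n occ" "vR \<in> vacant n occ" "vL + 1 < vR"
    and "\<forall>x\<in>{vL<..<vR}. x \<in> occ"
  shows "distr M lborel (\<lambda>\<omega>. P \<omega> vL - P \<omega> vR)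
           = uniform_measure lborel {- dist_line w vL vR .. dist_line w vL vR}"
proof -
  have block: "is_block n occ (vL + 1) (vR - 1) \<and> 0 < vL + 1 \<and> vR - 1 + 1 < n"
    using assms(2-5) unfolding is_block_def vacant_def by auto
  have "vR - 1 + 1 = vR"
    using assms(4) by simp
  with assms(1) block show ?thesis
    unfolding harmonic_payment_def by fastforce
qed

lemma prob_parks_at_gap_ends:
  assumes harmonic: "harmonic_payment M n occ w P"
    and w_pos: "\<And>k. k + 1 < n \<Longrightarrow> 0 < w k"
    and P_measurable: "\<And>x. x \<in> vacant n occ \<Longrightarrow> (\<lambda>\<omega>. P \<omega> x) \<in> borel_measurable M"
    and L: "vL \<in> vacant n occ" and R: "vR \<in> vacant n occ" and "vL < v" "v < vR"
    and gap: "\<forall>x\<in>{vL<..<vR}. x \<in> occ"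
  defines "dL \<equiv> dist_line w v vL" and "dR \<equiv> dist_line w v vR"
  shows "measure M {\<omega> \<in> space M. parks_at n occ w (P \<omega>) v vL} = dR / (dL + dR)"
    and "measure M {\<omega> \<in> space M. parks_at n occ w (P \<omega>) v vR} = dL / (dL + dR)"
proof -
  define X where "X = (\<lambda>\<omega>. P \<omega> vL - P \<omega> vR)"
  have "vR < n"
    using R unfolding vacant_def by simp
  then have "0 < dL" "0 < dR"
    using dist_line_pos[of n w, OF w_pos] \<open>vL < v\<close> \<open>v < vR\<close> unfolding dL_def dR_def
    by (metis dist_line_sym less_trans)+
  have "dist_line w vL vR = dL + dR"
    using dist_line_add[of vL v vR w] \<open>vL < v\<close> \<open>v < vR\<close> unfolding dL_def dR_def
    by (simp add: dist_line_sym)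
  then have X_uniform: "distr M lborel X = uniform_measure lborel {- (dL + dR) .. dL + dR}"
    using harmonic_payment_gap_distr[OF harmonic L R _ gap] \<open>vL < v\<close> \<open>v < vR\<close>
    unfolding X_def by simp
  have X_measurable: "X \<in> borel_measurable M"
    using P_measurable L R unfolding X_def by measurable
  have gap_vacant: "\<forall>x\<in>{vL<..<vR}. x \<notin> vacant n occ"
    using gap unfolding vacant_def by auto
  have "AE \<omega> in M. parks_at n occ w (P \<omega>) v vL \<longleftrightarrow> X \<omega> < dR - dL"
    and "AE \<omega> in M. parks_at n occ w (P \<omega>) v vR \<longleftrightarrow> dR - dL < X \<omega>"
    using harmonic_payment_AE_price_gaps[OF harmonic]
    by (eventually_elim,
        use parks_at_gap_end_iff[OF _ L R \<open>vL < v\<close> \<open>v < vR\<close> gap_vacant] in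
        \<open>auto simp: X_def dL_def dR_def\<close>)+
  then have "measure M {\<omega> \<in> space M. parks_at n occ w (P \<omega>) v vL}
             = measure M {\<omega> \<in> space M. X \<omega> < dR - dL}"
    and "measure M {\<omega> \<in> space M. parks_at n occ w (P \<omega>) v vR}
             = measure M {\<omega> \<in> space M. dR - dL < X \<omega>}"
    using sets_parks_at[OF P_measurable] X_measurable
    by (auto intro!: measure_eq_AE)
  moreover note measure_uniform_distr_less[OF X_measurable X_uniform, of "dR - dL"]
  ultimately show "measure M {\<omega> \<in> space M. parks_at n occ w (P \<omega>) v vL} = dR / (dL + dR)"
    and "measure M {\<omega> \<in> space M. parks_at n occ w (P \<omega>) v vR} = dL / (dL + dR)"
    using \<open>0 < dL\<close> \<open>0 < dR\<close> by (simp_all add: field_simps)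
qed

theorem lemma6:
  fixes M :: "'w measure" and n :: nat and occ :: "nat set" and w :: "nat \<Rightarrow> real"
    and P :: "'w \<Rightarrow> nat \<Rightarrow> real"
  assumes "prob_space M"
    and "occ \<subseteq> {..<n}"
    and "\<And>k. k + 1 < n \<Longrightarrow> 0 < w k"
    and "\<And>x. x \<in> vacant n occ \<Longrightarrow> (\<lambda>\<omega>. P \<omega> x) \<in> borel_measurable M"
    and "\<And>\<omega> x. \<omega> \<in> space M \<Longrightarrow> x \<in> vacant n occ \<Longrightarrow> 0 \<le> P \<omega> x"
    and "harmonic_payment M n occ w P"
  shows "(\<forall>g \<in> vacant n occ. AE \<omega> in M. parks_at n occ w (P \<omega>) g g) \<and>
    (\<forall>v vL vR. v \<in> occ \<and> vL \<in> vacant n occ \<and> vR \<in> vacant n occ \<and> vL < v \<and> v < vR \<and>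
        (\<forall>x\<in>{vL<..<vR}. x \<in> occ) \<longrightarrow>
       measure M {\<omega> \<in> space M. parks_at n occ w (P \<omega>) v vL}
         = dist_line w v vR / (dist_line w v vL + dist_line w v vR) \<and>
       measure M {\<omega> \<in> space M. parks_at n occ w (P \<omega>) v vR}
         = dist_line w v vL / (dist_line w v vL + dist_line w v vR))"
proof (intro conjI ballI allI impI)
  fix g assume "g \<in> vacant n occ"
  with harmonic_payment_AE_price_gaps[OF assms(6)]
  show "AE \<omega> in M. parks_at n occ w (P \<omega>) g g"
    by (auto elim: AE_mp intro: parks_at_vacant_goal)
next
  fix v vL vR
  assume "v \<in> occ \<and> vL \<in> vacant n occ \<and> vR \<in> vacant n occ \<and> vL < v \<and> v < vR \<and>
    (\<forall>x\<in>{vL<..<vR}. x \<in> occ)"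
  then show "measure M {\<omega> \<in> space M. parks_at n occ w (P \<omega>) v vL}
      = dist_line w v vR / (dist_line w v vL + dist_line w v vR)"
    and "measure M {\<omega> \<in> space M. parks_at n occ w (P \<omega>) v vR}
      = dist_line w v vL / (dist_line w v vL + dist_line w v vR)"
    using prob_parks_at_gap_ends[OF assms(6,3,4)] by auto
qed

end
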